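(* Let $(M^{2m},g,I,J)$ be a generalized Kähler manifold with $\det(I+J)\neq0$ everywhere, and let $b:=-g(I+J)^{-1}(I-J)$, i.e. $b(X,Y)=-g((I+J)^{-1}(I-J)X,Y)$, which is a 2-form of type $(2,0)+(0,2)$ with respect to both $I$ and $J$. Then for every vector $X$, $$d\big(\log\det(I+J)\big)(X)=-2\langle b,\iota_XH\rangle_g,$$ where $H=d^c_I\omega_I$.
   Context: Conventions: $\omega_I(X,Y):=g(IX,Y)$, $d^c_I:=\sqrt{-1}(\bar\partial_I-\partial_I)$. A generalized Kähler structure $(g,I,J)$: integrable $I,J$, $g$ Hermitian for both, with $d^c_I\omega_I=H=-d^c_J\omega_J$ and $dH=0$. The inner product on 2-forms is the standard one induced by $g$ (for which $e^i\wedge e^j$, $i<j$, are orthonormal for a $g$-orthonormal coframe). *)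

theory Defs
  imports "HOL-Analysis.Analysis"
begin

text \<open>Local (chart) model: an open set U in R^n, n = CARD('n). Tensor fields are
  functions on U; g, I, J are matrix-valued. Vectors X are tangent vectors at a point.\<close>

fun Ck_on :: "nat \<Rightarrow> 'a::euclidean_space set \<Rightarrow> ('a \<Rightarrow> 'b::euclidean_space) \<Rightarrow> bool" where
  "Ck_on 0 U f = continuous_on U f"
| "Ck_on (Suc k) U f =
     (f differentiable_on U \<and> (\<forall>v. Ck_on k U (\<lambda>x. frechet_derivative f (at x) v)))"

definition smooth_on :: "'a::euclidean_space set \<Rightarrow> ('a \<Rightarrow> 'b::euclidean_space) \<Rightarrow> bool" where
  "smooth_on U f \<longleftrightarrow> (\<forall>k. Ck_on k U f)"

definition Dir :: "('a::real_normed_vector \<Rightarrow> 'b::real_normed_vector) \<Rightarrow> 'a \<Rightarrow> 'a \<Rightarrow> 'b" where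
  "Dir f x v = frechet_derivative f (at x) v"

definition gmet :: "real^('n::finite)^'n \<Rightarrow> real^'n \<Rightarrow> real^'n \<Rightarrow> real" where
  "gmet G X Y = X \<bullet> (G *v Y)"

definition riem_metric_at :: "real^('n::finite)^'n \<Rightarrow> bool" where
  "riem_metric_at G \<longleftrightarrow> transpose G = G \<and> (\<forall>X. X \<noteq> 0 \<longrightarrow> gmet G X X > 0)"

definition almost_complex_at :: "real^('n::finite)^'n \<Rightarrow> bool" where
  "almost_complex_at I \<longleftrightarrow> I ** I = - mat 1"

definition hermitian_at :: "real^('n::finite)^'n \<Rightarrow> real^'n^'n \<Rightarrow> bool" where
  "hermitian_at G I \<longleftrightarrow> (\<forall>X Y. gmet G (I *v X) (I *v Y) = gmet G X Y)"

definition lie_bracket :: "(real^('n::finite) \<Rightarrow> real^'n) \<Rightarrow> (real^'n \<Rightarrow> real^'n) \<Rightarrow> real^'n \<Rightarrow> real^'n" where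
  "lie_bracket X Y x = Dir Y x (X x) - Dir X x (Y x)"

definition nijenhuis :: "(real^('n::finite) \<Rightarrow> real^'n^'n) \<Rightarrow> (real^'n \<Rightarrow> real^'n) \<Rightarrow> (real^'n \<Rightarrow> real^'n)
    \<Rightarrow> real^'n \<Rightarrow> real^'n" where
  "nijenhuis I X Y x =
     (let IX = (\<lambda>p. I p *v X p); IY = (\<lambda>p. I p *v Y p) in
       lie_bracket IX IY x - I x *v lie_bracket IX Y x - I x *v lie_bracket X IY x
       - lie_bracket X Y x)"

definition cx_integrable_on :: "(real^('n::finite)) set \<Rightarrow> (real^'n \<Rightarrow> real^'n^'n) \<Rightarrow> bool" where
  "cx_integrable_on U I \<longleftrightarrow>
     (\<forall>X Y. smooth_on U X \<longrightarrow> smooth_on U Y \<longrightarrow> (\<forall>x\<in>U. nijenhuis I X Y x = 0))"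

type_synonym 'n form2 = "real^'n \<Rightarrow> real^'n \<Rightarrow> real^'n \<Rightarrow> real"
type_synonym 'n form3 = "real^'n \<Rightarrow> real^'n \<Rightarrow> real^'n \<Rightarrow> real^'n \<Rightarrow> real"

text \<open>Exterior derivative in flat coordinates (constant vector fields commute).\<close>
definition ext_d2 :: "('n::finite) form2 \<Rightarrow> 'n form3" where
  "ext_d2 \<alpha> x X Y Z =
     Dir (\<lambda>p. \<alpha> p Y Z) x X - Dir (\<lambda>p. \<alpha> p X Z) x Y + Dir (\<lambda>p. \<alpha> p X Y) x Z"

definition ext_d3 :: "('n::finite) form3 \<Rightarrow> real^'n \<Rightarrow> real^'n \<Rightarrow> real^'n \<Rightarrow> real^'n \<Rightarrow> real^'n \<Rightarrow> real" where
  "ext_d3 \<beta> x W X Y Z =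
     Dir (\<lambda>p. \<beta> p X Y Z) x W - Dir (\<lambda>p. \<beta> p W Y Z) x X
   + Dir (\<lambda>p. \<beta> p W X Z) x Y - Dir (\<lambda>p. \<beta> p W X Y) x Z"

definition kform :: "(real^('n::finite) \<Rightarrow> real^'n^'n) \<Rightarrow> (real^'n \<Rightarrow> real^'n^'n) \<Rightarrow> 'n form2" where
  "kform g I x X Y = gmet (g x) (I x *v X) Y"

text \<open>d^c_I = sqrt(-1)(dbar - d) written in real form as I^{-1} d I, where I acts on
  k-forms by (I a)(X_1,..,X_k) = a(I X_1,..,I X_k). On a 2-form a (so d a is a 3-form and
  I^{-1} = -I on 3-forms):  d^c a (X,Y,Z) = - d(I a)(IX,IY,IZ).\<close>
definition dc2 :: "(real^('n::finite) \<Rightarrow> real^'n^'n) \<Rightarrow> 'n form2 \<Rightarrow> 'n form3" where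
  "dc2 I \<alpha> x X Y Z =
     - ext_d2 (\<lambda>p U V. \<alpha> p (I p *v U) (I p *v V)) x (I x *v X) (I x *v Y) (I x *v Z)"

definition gen_kahler_on ::
  "(real^('n::finite)) set \<Rightarrow> (real^'n \<Rightarrow> real^'n^'n) \<Rightarrow> (real^'n \<Rightarrow> real^'n^'n) \<Rightarrow> (real^'n \<Rightarrow> real^'n^'n) \<Rightarrow> bool" where
  "gen_kahler_on U g I J \<longleftrightarrow>
     open U \<and> smooth_on U g \<and> smooth_on U I \<and> smooth_on U J \<and>
     (\<forall>x\<in>U. riem_metric_at (g x) \<and> almost_complex_at (I x) \<and> almost_complex_at (J x)
            \<and> hermitian_at (g x) (I x) \<and> hermitian_at (g x) (J x)) \<and>
     cx_integrable_on U I \<and> cx_integrable_on U J \<and>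
     (\<forall>x\<in>U. \<forall>X Y Z. dc2 I (kform g I) x X Y Z = - dc2 J (kform g J) x X Y Z) \<and>
     (\<forall>x\<in>U. \<forall>W X Y Z. ext_d3 (dc2 I (kform g I)) x W X Y Z = 0)"

text \<open>With G the metric matrix and e_i the coordinate basis,
  <a,b>_g = 1/2 sum_{i,j,k,l} G^{ik} G^{jl} a(e_i,e_j) b(e_k,e_l); for a g-orthonormal frame
  this is sum_{i<j} a(e_i,e_j) b(e_i,e_j).\<close>
definition inner2 :: "real^('n::finite)^'n \<Rightarrow> (real^'n \<Rightarrow> real^'n \<Rightarrow> real) \<Rightarrow> (real^'n \<Rightarrow> real^'n \<Rightarrow> real) \<Rightarrow> real" where
  "inner2 G a b = (1/2) * (\<Sum>i\<in>UNIV. \<Sum>j\<in>UNIV. \<Sum>k\<in>UNIV. \<Sum>l\<in>UNIV.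
      matrix_inv G $ i $ k * matrix_inv G $ j $ l * a (axis i 1) (axis j 1) * b (axis k 1) (axis l 1))"

definition bform :: "(real^('n::finite) \<Rightarrow> real^'n^'n) \<Rightarrow> (real^'n \<Rightarrow> real^'n^'n) \<Rightarrow> (real^'n \<Rightarrow> real^'n^'n) \<Rightarrow> 'n form2" where
  "bform g I J x X Y = - gmet (g x) ((matrix_inv (I x + J x) ** (I x - J x)) *v X) Y"

end

theory Submission
  imports Defs
begin

text \<open>
  By Jacobi's formula, \<open>d log |det (I + J)| (X) = tr ((I + J)\<^sup>-\<^sup>1 (\<partial>\<^sub>X I + \<partial>\<^sub>X J))\<close>.
  The Bismut connections \<open>\<nabla> - \<onehalf> g\<^sup>-\<^sup>1 H\<close> and \<open>\<nabla> + \<onehalf> g\<^sup>-\<^sup>1 H\<close>, where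
  \<open>H = d\<^sup>c\<^sub>I \<omega>\<^sub>I = - d\<^sup>c\<^sub>J \<omega>\<^sub>J\<close>, preserve \<open>I\<close> and \<open>J\<close> respectively. In flat coordinates
  this reads \<open>\<partial>\<^sub>X I = [T - S, I]\<close> and \<open>\<partial>\<^sub>X J = [- T - S, J]\<close>, with
  \<open>T = \<onehalf> g\<^sup>-\<^sup>1 \<iota>\<^sub>X H\<close> and \<open>S\<close> the Christoffel matrix of \<open>g\<close>.
  The \<open>S\<close>-terms add up to a commutator with \<open>I + J\<close>, which has no trace against
  \<open>(I + J)\<^sup>-\<^sup>1\<close>; as \<open>I - J\<close> anticommutes with \<open>I + J\<close>, what remains is
  \<open>- 2 tr ((I + J)\<^sup>-\<^sup>1 (I - J) T)\<close>, and this is \<open>- 2 \<langle>b, \<iota>\<^sub>X H\<rangle>\<close>.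
\<close>

section \<open>Matrix algebra\<close>

lemma matrix_add_rdistrib: "((A::real^'n^'m) + B) ** C = A ** C + B ** C"
  by (simp add: matrix_matrix_mult_def vec_eq_iff sum.distrib algebra_simps)

lemma matrix_diff_rdistrib: "((A::real^'n^'m) - B) ** C = A ** C - B ** C"
  by (simp add: matrix_matrix_mult_def vec_eq_iff sum_subtractf algebra_simps)

lemma matrix_diff_ldistrib: "(A::real^'n^'m) ** (B - C) = A ** B - A ** C"
  by (simp add: matrix_matrix_mult_def vec_eq_iff sum_subtractf algebra_simps)

lemma matrix_neg_left: "(- (A::real^'n^'m)) ** B = - (A ** B)"
  by (simp add: matrix_matrix_mult_def vec_eq_iff sum_negf)

lemma matrix_neg_right: "(A::real^'n^'m) ** (- B) = - (A ** B)"
  by (simp add: matrix_matrix_mult_def vec_eq_iff sum_negf)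

lemmas matrix_mult_distribs = matrix_add_ldistrib matrix_add_rdistrib matrix_diff_ldistrib
  matrix_diff_rdistrib matrix_neg_left matrix_neg_right

lemma matrix_vector_mult_neg_left: "(- (A::real^'n^'m)) *v v = - (A *v v)"
  by (simp add: matrix_vector_mult_def vec_eq_iff sum_negf)

lemma matrix_vector_mult_neg_right: "(A::real^'n^'m) *v (- v) = - (A *v v)"
  by (simp add: matrix_vector_mult_def vec_eq_iff sum_negf)

lemma transpose_neg: "transpose (- (A::real^'n^'m)) = - transpose A"
  by (simp add: transpose_def vec_eq_iff)

lemma trace_neg: "trace (- (A::real^'n^'n)) = - trace A"
  by (simp add: trace_def sum_negf)

lemma trace_transpose: "trace (transpose (A::real^'n^'n)) = trace A"
  by (simp add: trace_def transpose_def)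

lemma trace_scaleR: "trace (c *\<^sub>R (A::real^'n^'n)) = c * trace A"
  by (simp add: trace_def sum_distrib_left)

lemma matrix_inv_right: "invertible (A::real^'n^'n) \<Longrightarrow> A ** matrix_inv A = mat 1"
  unfolding invertible_def matrix_inv_def by (metis (mono_tags, lifting) someI_ex)

lemma matrix_inv_left: "invertible (A::real^'n^'n) \<Longrightarrow> matrix_inv A ** A = mat 1"
  unfolding invertible_def matrix_inv_def by (metis (mono_tags, lifting) someI_ex)

lemma matrix_inv_unique:
  fixes A B :: "real^'n^'n"
  assumes "invertible A" "B ** A = mat 1"
  shows "B = matrix_inv A"
  by (metis assms matrix_inv_right matrix_mul_assoc matrix_mul_lid matrix_mul_rid)

lemma transpose_matrix_inv_symmetric:
  fixes G :: "real^'n^'n"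
  assumes "transpose G = G" "invertible G"
  shows "transpose (matrix_inv G) = matrix_inv G"
proof (rule matrix_inv_unique[OF assms(2)])
  have "transpose (matrix_inv G) ** G = transpose (G ** matrix_inv G)"
    by (metis assms(1) matrix_transpose_mul)
  then show "transpose (matrix_inv G) ** G = mat 1"
    using matrix_inv_right[OF assms(2)] by simp
qed

lemma matrix_vector_mult_axis: "((M::real^'n^'m) *v axis l 1) $ k = M$k$l"
  unfolding matrix_vector_mult_def axis_def by (simp add: if_distrib[of "(*) _"] cong: if_cong)

lemma inner_axis_matrix_axis: "axis k (1::real) \<bullet> (M *v axis l 1) = M$k$l"
  by (simp only: inner_axis' matrix_vector_mult_axis) simp

lemma matrix_eq_by_forms:
  fixes M N :: "real^'n^'n"
  assumes "\<And>Y Z. Z \<bullet> (M *v Y) = Z \<bullet> (N *v Y)"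
  shows "M = N"
  using assms[of "axis _ 1" "axis _ 1"] by (simp add: inner_axis_matrix_axis vec_eq_iff)

lemma inner_matrix_vector_transpose: "((A::real^'n^'n) *v Z) \<bullet> w = Z \<bullet> (transpose A *v w)"
  by (metis dot_lmul_matrix inner_commute transpose_matrix_vector)

lemma inner_symmetric_matrix:
  fixes A :: "real^'n^'n"
  assumes "transpose A = A"
  shows "Y \<bullet> (A *v Z) = Z \<bullet> (A *v Y)"
  by (metis assms inner_commute inner_matrix_vector_transpose)

definition commutator :: "real^'n^'n \<Rightarrow> real^'n^'n \<Rightarrow> real^'n^'n" where
  "commutator A B = A ** B - B ** A"

lemma trace_inv_commutator:
  fixes A S :: "real^'n^'n"
  assumes "invertible A"
  shows "trace (matrix_inv A ** commutator S A) = 0"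
proof -
  have "trace (matrix_inv A ** (S ** A)) = trace S"
    using trace_mul_sym[of "matrix_inv A ** S" A] matrix_inv_right[OF assms]
    by (simp add: matrix_mul_assoc)
  moreover have "trace (matrix_inv A ** (A ** S)) = trace S"
    using matrix_inv_left[OF assms] by (simp add: matrix_mul_assoc)
  ultimately show ?thesis
    by (simp add: commutator_def matrix_mult_distribs trace_sub)
qed

lemma trace_inv_commutator_anticommuting:
  fixes A D T :: "real^'n^'n"
  assumes "invertible A" and anti: "A ** D = - (D ** A)"
  shows "trace (matrix_inv A ** commutator T D) = - 2 * trace (matrix_inv A ** D ** T)"
proof -
  let ?Ai = "matrix_inv A"
  have "D ** ?Ai = ?Ai ** (A ** D) ** ?Ai"
    using matrix_inv_left[OF assms(1)] by (simp add: matrix_mul_assoc)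
  also have "\<dots> = - (?Ai ** D ** (A ** ?Ai))"
    by (simp add: anti matrix_mult_distribs matrix_mul_assoc)
  finally have DAi: "D ** ?Ai = - (?Ai ** D)"
    using matrix_inv_right[OF assms(1)] by simp
  have "trace (?Ai ** (T ** D)) = trace (D ** ?Ai ** T)"
    using trace_mul_sym[of "?Ai ** T" D] by (simp add: matrix_mul_assoc)
  then have "trace (?Ai ** (T ** D)) = - trace (?Ai ** D ** T)"
    by (simp add: DAi matrix_mult_distribs trace_neg)
  then show ?thesis
    by (simp add: commutator_def matrix_mult_distribs trace_sub matrix_mul_assoc)
qed

lemma complex_structures_sum_diff_anticommute:
  fixes I J :: "real^'n^'n"
  assumes "I ** I = - mat 1" "J ** J = - mat 1"
  shows "(I + J) ** (I - J) = - ((I - J) ** (I + J))"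
  using assms by (simp add: matrix_mult_distribs algebra_simps)

lemma trace_inv_sum_commutators_complex_structures:
  fixes I J S T :: "real^'n^'n"
  assumes "invertible (I + J)" "I ** I = - mat 1" "J ** J = - mat 1"
  shows "trace (matrix_inv (I + J) ** (commutator (T - S) I + commutator (- T - S) J))
       = - 2 * trace (matrix_inv (I + J) ** (I - J) ** T)"
proof -
  have "commutator (T - S) I + commutator (- T - S) J = commutator T (I - J) - commutator S (I + J)"
    by (simp add: commutator_def matrix_mult_distribs algebra_simps)
  then show ?thesis
    using trace_inv_commutator[OF assms(1), of S]
      trace_inv_commutator_anticommuting[OF assms(1) complex_structures_sum_diff_anticommute[OF assms(2,3)]]
    by (simp add: matrix_diff_ldistrib trace_sub)
qed

section \<open>Jacobi's formula\<close>

lemma has_derivative_matrix_entry: "((\<lambda>A::real^'n^'m. A$i$j) has_derivative (\<lambda>h. h$i$j)) (at M)"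
  by (rule bounded_linear.has_derivative[OF bounded_linear_vec_nth
        bounded_linear.has_derivative[OF bounded_linear_vec_nth has_derivative_ident]])

lemma det_replace_row:
  fixes M :: "real^'n^'n"
  shows "det (\<chi> j. if j = i then v else M$j) = (\<Sum>p\<in>{p. p permutes (UNIV::'n set)}. of_int (sign p) *
      (v$(p i) * (\<Prod>j\<in>UNIV - {i}. M$j$(p j))))"
proof -
  have "(\<Prod>j\<in>UNIV. (\<chi> j. if j = i then v else M$j)$j$(p j)) = v$(p i) * (\<Prod>j\<in>UNIV - {i}. M$j$(p j))"
    for p :: "'n \<Rightarrow> 'n"
    by (subst prod.remove[of UNIV i]) (auto intro!: prod.cong)
  then show ?thesis unfolding det_def by simp
qed

lemma has_derivative_det_rows:
  fixes M :: "real^'n^'n"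
  shows "(det has_derivative (\<lambda>B. \<Sum>i\<in>UNIV. det (\<chi> j. if j = i then B$i else M$j))) (at M)"
proof -
  have det: "det = (\<lambda>A::real^'n^'n. \<Sum>p\<in>{p. p permutes (UNIV::'n set)}. of_int (sign p) * (\<Prod>i\<in>UNIV. A$i$(p i)))"
    by (rule ext) (simp add: det_def)
  have "(det has_derivative (\<lambda>B. \<Sum>p\<in>{p. p permutes (UNIV::'n set)}. of_int (sign p) *
      (\<Sum>i\<in>UNIV. B$i$(p i) * (\<Prod>j\<in>UNIV - {i}. M$j$(p j))))) (at M)"
    unfolding det by (intro has_derivative_sum has_derivative_mult_right has_derivative_prod
        has_derivative_matrix_entry)
  moreover have "(\<Sum>p\<in>{p. p permutes (UNIV::'n set)}. of_int (sign p) *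
      (\<Sum>i\<in>UNIV. B$i$(p i) * (\<Prod>j\<in>UNIV - {i}. M$j$(p j))))
    = (\<Sum>i\<in>UNIV. det (\<chi> j. if j = i then B$i else M$j))" for B :: "real^'n^'n"
    by (simp add: det_replace_row sum_distrib_left) (rule sum.swap)
  ultimately show ?thesis by simp
qed

lemma row_matrix_mult: "((C::real^'n^'n) ** M)$i = (\<Sum>k\<in>UNIV. C$i$k *s M$k)"
  by (simp add: matrix_matrix_mult_def vec_eq_iff sum_component mult.commute)

lemma det_replace_row_by_row:
  fixes M :: "real^'n^'n"
  shows "det (\<chi> j. if j = i then M$k else M$j) = (if k = i then det M else 0)"
proof (cases "k = i")
  case True
  have "(\<chi> j. if j = i then M$k else M$j) = M" using True by (simp add: vec_eq_iff)
  then show ?thesis using True by simp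
next
  case False
  have "det (\<chi> j. if j = i then M$k else M$j) = 0"
    by (rule det_identical_rows[OF False[symmetric]]) (simp add: row_def vec_eq_iff False)
  then show ?thesis using False by simp
qed

lemma sum_det_replace_rows:
  fixes M B :: "real^'n^'n"
  assumes "invertible M"
  shows "(\<Sum>i\<in>UNIV. det (\<chi> j. if j = i then B$i else M$j)) = det M * trace (matrix_inv M ** B)"
proof -
  define C where "C = B ** matrix_inv M"
  have row: "B$i = (\<Sum>k\<in>UNIV. C$i$k *s M$k)" for i
    using row_matrix_mult[of C M i] matrix_inv_left[OF assms]
    by (simp add: C_def matrix_mul_assoc[symmetric])
  have "det (\<chi> j. if j = i then B$i else M$j) = C$i$i * det M" for i
  proof -
    have "det (\<chi> j. if j = i then B$i else M$j)
        = (\<Sum>k\<in>UNIV. det (\<chi> j. if j = i then C$i$k *s M$k else M$j))"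
      unfolding row by (rule det_linear_row_sum) simp
    also have "\<dots> = (\<Sum>k\<in>UNIV. C$i$k * det (\<chi> j. if j = i then M$k else M$j))"
      by (simp add: det_row_mul)
    finally show ?thesis
      by (simp add: det_replace_row_by_row if_distrib cong: if_cong)
  qed
  then have "(\<Sum>i\<in>UNIV. det (\<chi> j. if j = i then B$i else M$j)) = det M * trace C"
    by (simp add: trace_def sum_distrib_left mult.commute)
  also have "trace C = trace (matrix_inv M ** B)"
    unfolding C_def by (rule trace_mul_sym)
  finally show ?thesis .
qed

lemma has_derivative_det:
  fixes M :: "real^'n^'n"
  assumes "invertible M"
  shows "(det has_derivative (\<lambda>B. det M * trace (matrix_inv M ** B))) (at M)"
  using has_derivative_det_rows[of M] by (simp add: sum_det_replace_rows[OF assms])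

lemma has_real_derivative_ln_abs:
  fixes t :: real
  assumes "t \<noteq> 0"
  shows "((\<lambda>s. ln \<bar>s\<bar>) has_real_derivative 1/t) (at t)"
proof (cases "t > 0")
  case True
  show ?thesis
    by (rule has_field_derivative_transform_within_open[OF DERIV_ln_divide[OF True], of "{0<..}"])
       (use True in auto)
next
  case False
  then have tn: "t < 0" using assms by simp
  have "((\<lambda>s. ln (- s)) has_real_derivative (1 / (- t)) * (- 1)) (at t)"
    by (rule DERIV_chain2[OF DERIV_ln_divide]) (use tn in \<open>auto intro!: derivative_eq_intros\<close>)
  then have d: "((\<lambda>s. ln (- s)) has_real_derivative 1/t) (at t)" by simp
  show ?thesis
    by (rule has_field_derivative_transform_within_open[OF d, of "{..<0}"]) (use tn in auto)
qed

lemma Dir_ln_abs_det: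
  fixes I J :: "real^'n \<Rightarrow> real^'n^'n"
  assumes DI: "(I has_derivative dI) (at x)" and DJ: "(J has_derivative dJ) (at x)"
    and nd: "det (I x + J x) \<noteq> 0"
  shows "Dir (\<lambda>p. ln \<bar>det (I p + J p)\<bar>) x X = trace (matrix_inv (I x + J x) ** (dI X + dJ X))"
proof -
  have inv: "invertible (I x + J x)" using nd invertible_det_nz by blast
  note DA = has_derivative_add[OF DI DJ]
  note Dd = has_derivative_compose[OF DA has_derivative_det[OF inv]]
  note Dl = has_derivative_compose[OF Dd has_real_derivative_ln_abs[OF nd, unfolded has_field_derivative_def]]
  have fd: "(\<lambda>h. 1 / det (I x + J x) * (det (I x + J x) * trace (matrix_inv (I x + J x) ** (dI h + dJ h))))
      = frechet_derivative (\<lambda>p. ln \<bar>det (I p + J p)\<bar>) (at x)"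
    by (rule frechet_derivative_at[OF Dl])
  show ?thesis unfolding Dir_def fd[symmetric] using nd by simp
qed

section \<open>Bilinear forms and their matrices\<close>

lemma quadruple_sum_eq_trace:
  fixes P A B :: "real^'n^'n"
  assumes "transpose P = P"
  shows "(\<Sum>i\<in>UNIV. \<Sum>j\<in>UNIV. \<Sum>k\<in>UNIV. \<Sum>l\<in>UNIV. P$i$k * P$j$l * A$j$i * B$l$k)
       = trace (transpose A ** (P ** (B ** P)))"
proof -
  have Psym: "\<And>i k. P$k$i = P$i$k" using assms by (metis transpose_def vec_lambda_beta)
  have "trace (transpose A ** (P ** (B ** P)))
      = (\<Sum>i\<in>UNIV. \<Sum>j\<in>UNIV. \<Sum>l\<in>UNIV. \<Sum>k\<in>UNIV. P$i$k * P$j$l * A$j$i * B$l$k)"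
    by (simp add: trace_def matrix_matrix_mult_def transpose_def sum_distrib_left Psym mult_ac)
  also have "\<dots> = (\<Sum>i\<in>UNIV. \<Sum>j\<in>UNIV. \<Sum>k\<in>UNIV. \<Sum>l\<in>UNIV. P$i$k * P$j$l * A$j$i * B$l$k)"
    by (intro sum.cong refl sum.swap)
  finally show ?thesis ..
qed

lemma inner2_matrix_forms:
  fixes G A B :: "real^'n^'n"
  assumes "transpose G = G" "invertible G"
  shows "inner2 G (\<lambda>Y Z. Z \<bullet> (A *v Y)) (\<lambda>Y Z. Z \<bullet> (B *v Y))
       = trace (transpose A ** (matrix_inv G ** (B ** matrix_inv G))) / 2"
  unfolding inner2_def inner_axis_matrix_axis
  by (simp only: quadruple_sum_eq_trace[OF transpose_matrix_inv_symmetric[OF assms]])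

lemma inner2_gmet_form:
  fixes G M Hm :: "real^'n^'n"
  assumes G: "transpose G = G" "invertible G" and Hm: "transpose Hm = - Hm"
  shows "inner2 G (\<lambda>Y Z. - gmet G (M *v Y) Z) (\<lambda>Y Z. Z \<bullet> (Hm *v Y))
       = trace (M ** matrix_inv G ** Hm) / 2"
proof -
  let ?Gi = "matrix_inv G"
  have "(\<lambda>Y Z. - gmet G (M *v Y) Z) = (\<lambda>Y Z. Z \<bullet> (- (G ** M) *v Y))"
    using inner_symmetric_matrix[OF G(1)]
    by (simp add: fun_eq_iff gmet_def matrix_vector_mult_neg_left matrix_vector_mul_assoc)
  then have "inner2 G (\<lambda>Y Z. - gmet G (M *v Y) Z) (\<lambda>Y Z. Z \<bullet> (Hm *v Y))
      = - trace (transpose M ** (G ** ?Gi) ** (Hm ** ?Gi)) / 2"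
    by (simp add: inner2_matrix_forms[OF G] transpose_neg matrix_transpose_mul G(1)
        matrix_mult_distribs trace_neg matrix_mul_assoc)
  also have "trace (transpose M ** (G ** ?Gi) ** (Hm ** ?Gi)) = trace (transpose (transpose M ** Hm ** ?Gi))"
    by (simp add: trace_transpose matrix_inv_right[OF G(2)] matrix_mul_assoc)
  also have "\<dots> = - trace (?Gi ** Hm ** M)"
    by (simp add: matrix_transpose_mul transpose_matrix_inv_symmetric[OF G] Hm matrix_mult_distribs
        trace_neg matrix_mul_assoc)
  also have "\<dots> = - trace (M ** ?Gi ** Hm)"
    by (metis trace_mul_sym matrix_mul_assoc)
  finally show ?thesis by simp
qed

definition form_matrix :: "(real^'n \<Rightarrow> real^'n \<Rightarrow> real) \<Rightarrow> real^'n^'n" where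
  "form_matrix \<beta> = (\<chi> k l. \<beta> (axis l 1) (axis k 1))"

lemma form_matrix_uminus: "form_matrix (- \<beta>) = - form_matrix \<beta>"
  by (simp add: form_matrix_def vec_eq_iff)

lemma linear_basis_expansion:
  fixes f :: "real^'n \<Rightarrow> real"
  assumes "linear f"
  shows "f Y = (\<Sum>l\<in>UNIV. Y$l * f (axis l 1))"
proof -
  have "f Y = f (\<Sum>l\<in>UNIV. (Y$l) *s axis l 1)" by (simp add: basis_expansion)
  also have "\<dots> = (\<Sum>l\<in>UNIV. Y$l * f (axis l 1))"
    using assms by (simp add: linear_sum linear_scale scalar_mult_eq_scaleR)
  finally show ?thesis .
qed

lemma inner_form_matrix:
  assumes "bilinear \<beta>"
  shows "Z \<bullet> (form_matrix \<beta> *v Y) = \<beta> Y Z"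
proof -
  have lin1: "linear (\<lambda>Y. \<beta> Y Z)" and lin2: "\<And>Y. linear (\<beta> Y)"
    using assms by (simp_all add: bilinear_def)
  have "\<beta> Y Z = (\<Sum>l\<in>UNIV. Y$l * \<beta> (axis l 1) Z)"
    by (rule linear_basis_expansion[OF lin1])
  also have "\<dots> = (\<Sum>l\<in>UNIV. Y$l * (\<Sum>k\<in>UNIV. Z$k * \<beta> (axis l 1) (axis k 1)))"
    by (simp only: linear_basis_expansion[OF lin2, of _ Z])
  also have "\<dots> = (\<Sum>k\<in>UNIV. Z$k * (\<Sum>l\<in>UNIV. \<beta> (axis l 1) (axis k 1) * Y$l))"
    by (simp add: sum_distrib_left mult_ac) (rule sum.swap)
  also have "\<dots> = Z \<bullet> (form_matrix \<beta> *v Y)"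
    by (simp add: form_matrix_def inner_vec_def matrix_vector_mult_def)
  finally show ?thesis by simp
qed

lemma transpose_form_matrix_antisymmetric:
  assumes "\<And>Y Z. \<beta> Y Z = - \<beta> Z Y"
  shows "transpose (form_matrix \<beta>) = - form_matrix \<beta>"
  by (simp add: form_matrix_def transpose_def vec_eq_iff, intro allI assms)

section \<open>The Bismut connection preserves the complex structure\<close>

text \<open>\<open>(K \<omega>)(U, V) = \<omega>(K U, K V) = - g(U, K V)\<close>; \<open>twisted_kform_deriv\<close> is its derivative along \<open>W\<close>,
  written in terms of the 1-jet \<open>(G, K, dG, dK)\<close> of \<open>(g, K)\<close> at a point, and \<open>dc_kform_jet\<close> is
  \<open>d\<^sup>c \<omega> = - d(K \<omega>)(K\<cdot>, K\<cdot>, K\<cdot>)\<close> computed from it, as in \<open>dc2\<close>.\<close>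

definition twisted_kform_deriv ::
  "real^'n^'n \<Rightarrow> real^'n^'n \<Rightarrow> (real^'n \<Rightarrow> real^'n^'n) \<Rightarrow> (real^'n \<Rightarrow> real^'n^'n)
    \<Rightarrow> real^'n \<Rightarrow> real^'n \<Rightarrow> real^'n \<Rightarrow> real" where
  "twisted_kform_deriv G K dG dK W U V = - (U \<bullet> (dG W *v (K *v V))) - U \<bullet> (G *v (dK W *v V))"

definition dc_kform_jet ::
  "real^'n^'n \<Rightarrow> real^'n^'n \<Rightarrow> (real^'n \<Rightarrow> real^'n^'n) \<Rightarrow> (real^'n \<Rightarrow> real^'n^'n)
    \<Rightarrow> real^'n \<Rightarrow> real^'n \<Rightarrow> real^'n \<Rightarrow> real" where
  "dc_kform_jet G K dG dK X Y Z =
     - (twisted_kform_deriv G K dG dK (K *v X) (K *v Y) (K *v Z)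
        - twisted_kform_deriv G K dG dK (K *v Y) (K *v X) (K *v Z)
        + twisted_kform_deriv G K dG dK (K *v Z) (K *v X) (K *v Y))"

definition christoffel :: "(real^'n \<Rightarrow> real^'n^'n) \<Rightarrow> real^'n \<Rightarrow> real^'n \<Rightarrow> real^'n \<Rightarrow> real" where
  "christoffel dG X Y Z = (Y \<bullet> (dG X *v Z) + X \<bullet> (dG Y *v Z) - X \<bullet> (dG Z *v Y)) / 2"

lemma bilinear_christoffel:
  assumes "linear dG"
  shows "bilinear (christoffel dG X)"
  unfolding bilinear_def
  by (intro conjI allI linearI)
     (simp_all add: christoffel_def linear_add[OF assms] linear_scale[OF assms]
       matrix_vector_mult_add_rdistrib matrix_vector_right_distrib inner_add_left inner_add_right
       scaleR_matrix_vector_assoc[symmetric] matrix_vector_mult_scaleR field_simps)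

lemma bilinear_dc_kform_jet:
  assumes "linear dG" "linear dK"
  shows "bilinear (dc_kform_jet G K dG dK X)"
  unfolding bilinear_def
  by (intro conjI allI linearI)
     (simp_all add: dc_kform_jet_def twisted_kform_deriv_def linear_add[OF assms(1)] linear_scale[OF assms(1)]
       linear_add[OF assms(2)] linear_scale[OF assms(2)]
       matrix_vector_mult_add_rdistrib matrix_vector_right_distrib inner_add_left inner_add_right
       scaleR_matrix_vector_assoc[symmetric] matrix_vector_mult_scaleR algebra_simps)

locale integrable_hermitian_jet =
  fixes G K :: "real^'n::finite^'n" and dG dK :: "real^'n \<Rightarrow> real^'n^'n"
  assumes symmetric_G: "transpose G = G"
    and invertible_G: "invertible G"
    and complex_K: "K ** K = - mat 1"
    and hermitian_K: "hermitian_at G K"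
    and linear_dG: "linear dG"
    and linear_dK: "linear dK"
    and symmetric_dG: "transpose (dG W) = dG W"
    and anticommute_dK: "dK W ** K + K ** dK W = 0"
    and hermitian_dK: "(dK W *v X) \<bullet> (G *v (K *v Y)) + (K *v X) \<bullet> (dG W *v (K *v Y))
                       + (K *v X) \<bullet> (G *v (dK W *v Y)) = X \<bullet> (dG W *v Y)"
    and integrable_dK: "dK (K *v X) *v Y - dK (K *v Y) *v X + K *v (dK Y *v X) - K *v (dK X *v Y) = 0"
begin

lemma K_K_apply [simp]: "K *v (K *v v) = - v"
  by (simp add: matrix_vector_mul_assoc complex_K matrix_vector_mult_neg_left)

lemma G_symmetric_form: "u \<bullet> (G *v v) = v \<bullet> (G *v u)"
  by (rule inner_symmetric_matrix[OF symmetric_G])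

lemma G_K_skew: "(K *v u) \<bullet> (G *v v) = - (u \<bullet> (G *v (K *v v)))"
  using hermitian_K[unfolded hermitian_at_def gmet_def, rule_format, of u "K *v v"]
  by (simp add: matrix_vector_mult_neg_right)

lemma dK_K_apply: "dK W *v (K *v v) = - (K *v (dK W *v v))"
proof -
  have "dK W ** K = - (K ** dK W)"
    using anticommute_dK by (simp add: eq_neg_iff_add_eq_0)
  then show ?thesis by (simp add: matrix_vector_mul_assoc matrix_vector_mult_neg_left)
qed

definition dK_form :: "real^'n \<Rightarrow> real^'n \<Rightarrow> real^'n \<Rightarrow> real" where
  "dK_form W U V = (dK W *v U) \<bullet> (G *v V)"

definition dG_form :: "real^'n \<Rightarrow> real^'n \<Rightarrow> real^'n \<Rightarrow> real" where
  "dG_form W U V = U \<bullet> (dG W *v V)"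

lemma dK_form_neg [simp]:
  "dK_form (- a) b c = - dK_form a b c" "dK_form a (- b) c = - dK_form a b c"
  "dK_form a b (- c) = - dK_form a b c"
  by (simp_all add: dK_form_def linear_neg[OF linear_dK] matrix_vector_mult_neg_left
      matrix_vector_mult_neg_right)

lemma dG_form_neg [simp]:
  "dG_form (- a) b c = - dG_form a b c" "dG_form a (- b) c = - dG_form a b c"
  "dG_form a b (- c) = - dG_form a b c"
  by (simp_all add: dG_form_def linear_neg[OF linear_dG] matrix_vector_mult_neg_left
      matrix_vector_mult_neg_right)

lemma dG_form_commute: "dG_form a b c = dG_form a c b"
  unfolding dG_form_def by (rule inner_symmetric_matrix[OF symmetric_dG])

lemma dK_form_K: "dK_form a (K *v b) c = dK_form a b (K *v c)"
  by (simp add: dK_form_def dK_K_apply G_K_skew)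

lemma dK_form_hermitian:
  "dK_form a b (K *v c) + dG_form a (K *v b) (K *v c) + dK_form a c (K *v b) = dG_form a b c"
  using hermitian_dK[of a b c] G_symmetric_form unfolding dK_form_def dG_form_def by metis

lemma dK_form_integrable:
  "dK_form (K *v a) b c - dK_form (K *v b) a c - dK_form b a (K *v c) + dK_form a b (K *v c) = 0"
  using arg_cong[OF integrable_dK[of a b], of "\<lambda>v. v \<bullet> (G *v c)"]
  by (simp add: dK_form_def inner_diff_left inner_add_left G_K_skew)

lemma dc_kform_jet_eq:
  "dc_kform_jet G K dG dK X Y Z =
      dG_form (K *v X) (K *v Y) (K *v (K *v Z)) + dK_form (K *v X) (K *v Z) (K *v Y)
    - dG_form (K *v Y) (K *v X) (K *v (K *v Z)) - dK_form (K *v Y) (K *v Z) (K *v X)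
    + dG_form (K *v Z) (K *v X) (K *v (K *v Y)) + dK_form (K *v Z) (K *v Y) (K *v X)"
  unfolding dc_kform_jet_def twisted_kform_deriv_def dK_form_def dG_form_def
  using G_symmetric_form by (smt (verit))

lemma christoffel_eq: "christoffel dG X Y Z = (dG_form X Y Z + dG_form Y X Z - dG_form Z X Y) / 2"
  by (simp add: christoffel_def dG_form_def)

text \<open>This is \<open>\<nabla>\<^sub>X K = \<onehalf> [g\<^sup>-\<^sup>1 \<iota>\<^sub>X H, K]\<close> for the Levi-Civita connection \<open>\<nabla>\<close> and
  \<open>H = d\<^sup>c \<omega>\<close>, i.e. the Bismut connection \<open>\<nabla> - \<onehalf> g\<^sup>-\<^sup>1 H\<close> preserves \<open>K\<close>.\<close>

theorem bismut_parallel: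
  "(dK X *v Y) \<bullet> (G *v Z) + christoffel dG X (K *v Y) Z + christoffel dG X Y (K *v Z)
     = (dc_kform_jet G K dG dK X (K *v Y) Z + dc_kform_jet G K dG dK X Y (K *v Z)) / 2"
  using dK_form_hermitian[of "K *v X" Y Z] dK_form_integrable[of X "K *v Z" Y]
    dK_form_hermitian[of X Y "K *v Z"] dK_form_hermitian[of Y X "K *v Z"]
    dK_form_hermitian[of "K *v Y" X Z] dK_form_integrable[of X Y "K *v Z"]
    dK_form_hermitian[of Z X "K *v Y"] dK_form_hermitian[of "K *v Z" X Y]
  unfolding dc_kform_jet_eq christoffel_eq dK_form_def[symmetric]
  by (simp add: dG_form_commute matrix_vector_mult_neg_right field_simps)

lemma dc_kform_jet_antisymmetric: "dc_kform_jet G K dG dK X Y Z = - dc_kform_jet G K dG dK X Z Y"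
  using dK_form_hermitian[of "K *v X" Y "K *v Z"] dK_form_integrable[of X "K *v Y" "K *v Z"]
    dK_form_integrable[of X Y Z] dK_form_K[of X Y Z]
  unfolding dc_kform_jet_eq by (simp add: dG_form_commute matrix_vector_mult_neg_right)

lemma transpose_K_G: "transpose K ** G = - (G ** K)"
proof (rule matrix_eq_by_forms)
  fix Y Z
  have "Z \<bullet> ((transpose K ** G) *v Y) = (K *v Z) \<bullet> (G *v Y)"
    by (simp add: inner_matrix_vector_transpose matrix_vector_mul_assoc[symmetric])
  also have "\<dots> = Z \<bullet> (- (G ** K) *v Y)"
    by (simp add: G_K_skew matrix_vector_mult_neg_left matrix_vector_mul_assoc)
  finally show "Z \<bullet> ((transpose K ** G) *v Y) = Z \<bullet> (- (G ** K) *v Y)" .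
qed

lemma dK_eq_commutator:
  "dK X = commutator (matrix_inv G **
     ((1/2) *\<^sub>R form_matrix (dc_kform_jet G K dG dK X) - form_matrix (christoffel dG X))) K"
proof -
  define N where "N = (1/2) *\<^sub>R form_matrix (dc_kform_jet G K dG dK X) - form_matrix (christoffel dG X)"
  have N: "Z \<bullet> (N *v Y) = dc_kform_jet G K dG dK X Y Z / 2 - christoffel dG X Y Z" for Y Z
    by (simp add: N_def matrix_vector_mult_diff_rdistrib scaleR_matrix_vector_assoc[symmetric]
        inner_diff_right inner_form_matrix bilinear_dc_kform_jet bilinear_christoffel
        linear_dG linear_dK)
  have G_dK: "G ** dK X = N ** K + transpose K ** N"
  proof (rule matrix_eq_by_forms)
    fix Y Z
    show "Z \<bullet> ((G ** dK X) *v Y) = Z \<bullet> ((N ** K + transpose K ** N) *v Y)"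
      using bismut_parallel[of X Y Z]
      by (simp add: matrix_vector_mult_add_rdistrib inner_add_right N G_symmetric_form[of Z]
          matrix_vector_mul_assoc[symmetric] inner_matrix_vector_transpose[symmetric]
          del: transpose_matrix_vector)
  qed
  have Gi_Kt: "matrix_inv G ** transpose K = - (K ** matrix_inv G)"
  proof -
    have "matrix_inv G ** transpose K = matrix_inv G ** (transpose K ** G) ** matrix_inv G"
      by (simp add: matrix_mul_assoc[symmetric] matrix_inv_right[OF invertible_G])
    also have "\<dots> = - (matrix_inv G ** G ** K ** matrix_inv G)"
      by (simp add: transpose_K_G matrix_mult_distribs matrix_mul_assoc)
    finally show ?thesis by (simp add: matrix_inv_left[OF invertible_G])
  qed
  have "dK X = matrix_inv G ** (G ** dK X)"
    by (simp add: matrix_mul_assoc matrix_inv_left[OF invertible_G])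
  also have "\<dots> = commutator (matrix_inv G ** N) K"
    by (simp add: G_dK commutator_def matrix_mult_distribs matrix_mul_assoc Gi_Kt)
  finally show ?thesis unfolding N_def .
qed

lemma inner2_dc_kform_jet:
  "inner2 G (\<lambda>Y Z. - gmet G (M *v Y) Z) (dc_kform_jet G K dG dK X)
     = trace (M ** matrix_inv G ** form_matrix (dc_kform_jet G K dG dK X)) / 2"
proof -
  let ?H = "form_matrix (dc_kform_jet G K dG dK X)"
  have "dc_kform_jet G K dG dK X = (\<lambda>Y Z. Z \<bullet> (?H *v Y))"
    by (simp add: fun_eq_iff inner_form_matrix bilinear_dc_kform_jet linear_dG linear_dK)
  moreover have "transpose ?H = - ?H"
    by (rule transpose_form_matrix_antisymmetric, rule dc_kform_jet_antisymmetric)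
  ultimately show ?thesis
    using inner2_gmet_form[OF symmetric_G invertible_G, of ?H M] by metis
qed

end

lemma trace_inv_sum_jets_eq_inner2:
  assumes "integrable_hermitian_jet G I dG dI" "integrable_hermitian_jet G J dG dJ"
    and dc_J: "dc_kform_jet G J dG dJ X = - dc_kform_jet G I dG dI X"
    and A: "invertible (I + J)"
  shows "trace (matrix_inv (I + J) ** (dI X + dJ X))
       = - 2 * inner2 G (\<lambda>Y Z. - gmet G ((matrix_inv (I + J) ** (I - J)) *v Y) Z) (dc_kform_jet G I dG dI X)"
proof -
  interpret I: integrable_hermitian_jet G I dG dI by fact
  interpret J: integrable_hermitian_jet G J dG dJ by fact
  define H where "H = form_matrix (dc_kform_jet G I dG dI X)"
  define T where "T = matrix_inv G ** ((1/2) *\<^sub>R H)"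
  define S where "S = matrix_inv G ** form_matrix (christoffel dG X)"
  define M where "M = matrix_inv (I + J) ** (I - J)"
  have "dI X + dJ X = commutator (T - S) I + commutator (- T - S) J"
    using I.dK_eq_commutator[of X] J.dK_eq_commutator[of X]
    by (simp add: dc_J T_def S_def H_def form_matrix_uminus matrix_diff_ldistrib matrix_neg_right)
  then have "trace (matrix_inv (I + J) ** (dI X + dJ X)) = - 2 * trace (M ** T)"
    unfolding M_def by (simp add: trace_inv_sum_commutators_complex_structures[OF A I.complex_K J.complex_K])
  also have "\<dots> = - trace (M ** matrix_inv G ** H)"
    by (simp add: T_def trace_scaleR matrix_scalar_ac scalar_matrix_assoc[symmetric] matrix_mul_assoc)
  also have "\<dots> = - 2 * inner2 G (\<lambda>Y Z. - gmet G (M *v Y) Z) (dc_kform_jet G I dG dI X)"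
    by (simp add: I.inner2_dc_kform_jet H_def)
  finally show ?thesis unfolding M_def .
qed

section \<open>First-order jets of smooth Hermitian structures\<close>

lemma Ck_on_const: "Ck_on k U (\<lambda>_. c)"
  by (induction k arbitrary: c) (simp_all add: continuous_on_const)

lemma smooth_on_const: "smooth_on U (\<lambda>_. c)"
  unfolding smooth_on_def using Ck_on_const by blast

lemma smooth_on_has_derivative:
  assumes "smooth_on U f" "open U" "x \<in> U"
  shows "(f has_derivative frechet_derivative f (at x)) (at x)"
proof -
  have "f differentiable_on U"
    using assms(1) unfolding smooth_on_def by (metis Ck_on.simps(2))
  then show ?thesis
    using assms(2,3) differentiable_on_eq_differentiable_at frechet_derivative_works by blast
qed

lemma has_derivative_constant_on_open:
  assumes "(f has_derivative f') (at x)" "open U" "x \<in> U" "\<And>p. p \<in> U \<Longrightarrow> f p = c"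
  shows "f' h = 0"
proof -
  have "((\<lambda>p. c) has_derivative f') (at x)"
    using has_derivative_transform_within_open[OF assms(1,2,3)] assms(4) by metis
  then have "f' = (\<lambda>_. 0)" using has_derivative_const has_derivative_unique by blast
  then show ?thesis by simp
qed

lemma bounded_linear_matrix_vector_mult_left: "bounded_linear (\<lambda>A::real^'n^'m. A *v v)"
  by (simp add: linear_conv_bounded_linear[symmetric] linearI matrix_vector_mult_add_rdistrib
      scaleR_matrix_vector_assoc)

lemma bounded_linear_transpose: "bounded_linear (transpose :: real^'n^'m \<Rightarrow> real^'m^'n)"
  by (simp add: linear_conv_bounded_linear[symmetric] linearI transpose_def vec_eq_iff)

lemma bounded_bilinear_matrix_vector_mult: "bounded_bilinear (\<lambda>(A::real^'n^'m) v. A *v v)"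
  unfolding bilinear_conv_bounded_bilinear[symmetric] bilinear_def
  using bounded_linear_matrix_vector_mult_left[THEN bounded_linear.linear] by auto

lemma bounded_bilinear_matrix_mult: "bounded_bilinear (\<lambda>(A::real^'n^'m) (B::real^'k^'n). A ** B)"
  by (simp add: bilinear_conv_bounded_bilinear[symmetric] bilinear_def linearI vec_eq_iff
      matrix_matrix_mult_def sum.distrib sum_distrib_left algebra_simps)

lemmas has_derivative_matrix_vector_mult = bounded_bilinear.FDERIV[OF bounded_bilinear_matrix_vector_mult]
lemmas has_derivative_matrix_mult = bounded_bilinear.FDERIV[OF bounded_bilinear_matrix_mult]
lemmas has_derivative_matrix_vector_mult_left =
  bounded_linear.has_derivative[OF bounded_linear_matrix_vector_mult_left]

lemma has_derivative_complex_structure_anticommute: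
  fixes K :: "real^'n \<Rightarrow> real^'n^'n"
  assumes D: "(K has_derivative dK) (at x)" and "open U" "x \<in> U"
    and "\<And>p. p \<in> U \<Longrightarrow> K p ** K p = - mat 1"
  shows "dK W ** K x + K x ** dK W = 0"
  using has_derivative_constant_on_open[OF has_derivative_matrix_mult[OF D D] assms(2-4)]
  by (simp add: add.commute)

lemma has_derivative_symmetric_matrix:
  fixes g :: "real^'n \<Rightarrow> real^'n^'n"
  assumes D: "(g has_derivative dG) (at x)" and "open U" "x \<in> U"
    and "\<And>p. p \<in> U \<Longrightarrow> transpose (g p) = g p"
  shows "transpose (dG W) = dG W"
  using has_derivative_constant_on_open[OF has_derivative_diff[OF
      bounded_linear.has_derivative[OF bounded_linear_transpose D] D] assms(2,3), of 0 W] assms(4)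
  by simp

lemma has_derivative_hermitian:
  fixes g K :: "real^'n \<Rightarrow> real^'n^'n"
  assumes Dg: "(g has_derivative dG) (at x)" and DK: "(K has_derivative dK) (at x)"
    and "open U" "x \<in> U" and "\<And>p. p \<in> U \<Longrightarrow> hermitian_at (g p) (K p)"
  shows "(dK W *v X) \<bullet> (g x *v (K x *v Y)) + (K x *v X) \<bullet> (dG W *v (K x *v Y))
           + (K x *v X) \<bullet> (g x *v (dK W *v Y)) = X \<bullet> (dG W *v Y)"
proof -
  note DKX = has_derivative_matrix_vector_mult_left[OF DK, of X]
  note DgKY = has_derivative_matrix_vector_mult[OF Dg has_derivative_matrix_vector_mult_left[OF DK, of Y]]
  note DgY = has_derivative_inner[OF has_derivative_const[of X]
      has_derivative_matrix_vector_mult_left[OF Dg, of Y]]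
  have "(K x *v X) \<bullet> (g x *v (dK W *v Y) + dG W *v (K x *v Y)) + (dK W *v X) \<bullet> (g x *v (K x *v Y))
      - (X \<bullet> (dG W *v Y) + 0 \<bullet> (g x *v Y)) = 0"
    by (rule has_derivative_constant_on_open[OF has_derivative_diff[OF has_derivative_inner[OF DKX DgKY] DgY]
          assms(3,4)])
       (use assms(5) in \<open>simp add: hermitian_at_def gmet_def\<close>)
  then show ?thesis by (simp add: inner_add_right algebra_simps)
qed

lemma Dir_matrix_vector_mult_const:
  fixes K :: "real^'n \<Rightarrow> real^'n^'n"
  assumes "(K has_derivative dK) (at x)"
  shows "Dir (\<lambda>p. K p *v Y) x v = dK v *v Y"
  using frechet_derivative_at[OF has_derivative_matrix_vector_mult_left[OF assms, of Y]]
  unfolding Dir_def by metis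

text \<open>The bracket of constant vector fields vanishes, so on them the Nijenhuis tensor only
  involves \<open>dK\<close>.\<close>

lemma has_derivative_integrable:
  fixes K :: "real^'n \<Rightarrow> real^'n^'n"
  assumes D: "(K has_derivative dK) (at x)" and "x \<in> U" and "cx_integrable_on U K"
  shows "dK (K x *v X) *v Y - dK (K x *v Y) *v X + K x *v (dK Y *v X) - K x *v (dK X *v Y) = 0"
proof -
  have "nijenhuis K (\<lambda>_. X) (\<lambda>_. Y) x = 0"
    using assms(2,3) smooth_on_const unfolding cx_integrable_on_def by blast
  then show ?thesis
    by (simp add: nijenhuis_def Let_def lie_bracket_def Dir_def Dir_matrix_vector_mult_const[OF D, unfolded Dir_def]
        matrix_vector_mult_neg_right matrix_vector_mult_diff_distrib algebra_simps)
qed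

lemma Dir_twisted_kform:
  fixes g K :: "real^'n \<Rightarrow> real^'n^'n"
  assumes Dg: "(g has_derivative dG) (at x)" and DK: "(K has_derivative dK) (at x)"
    and "open S" "x \<in> S" and "\<And>p. p \<in> S \<Longrightarrow> K p ** K p = - mat 1"
  shows "Dir (\<lambda>p. kform g K p (K p *v A) (K p *v B)) x W = twisted_kform_deriv (g x) (K x) dG dK W A B"
proof -
  have D: "((\<lambda>p. - (A \<bullet> (g p *v (K p *v B)))) has_derivative
      (\<lambda>h. - (A \<bullet> (g x *v (dK h *v B) + dG h *v (K x *v B))))) (at x)"
    by (intro has_derivative_minus bounded_linear.has_derivative[OF bounded_linear_inner_right]
        has_derivative_matrix_vector_mult[OF Dg] has_derivative_matrix_vector_mult_left[OF DK])
  have D': "((\<lambda>p. kform g K p (K p *v A) (K p *v B)) has_derivative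
      (\<lambda>h. - (A \<bullet> (g x *v (dK h *v B) + dG h *v (K x *v B))))) (at x)"
    by (rule has_derivative_transform_within_open[OF D assms(3,4)])
       (use assms(5) in \<open>simp add: kform_def gmet_def matrix_vector_mul_assoc matrix_vector_mult_neg_left\<close>)
  show ?thesis
    unfolding Dir_def frechet_derivative_at[OF D', symmetric]
    by (simp add: twisted_kform_deriv_def inner_add_right)
qed

lemma dc2_kform_eq_dc_kform_jet:
  fixes g K :: "real^'n \<Rightarrow> real^'n^'n"
  assumes "(g has_derivative dG) (at x)" "(K has_derivative dK) (at x)"
    and "open U" "x \<in> U" and "\<And>p. p \<in> U \<Longrightarrow> K p ** K p = - mat 1"
  shows "dc2 K (kform g K) x X Y Z = dc_kform_jet (g x) (K x) dG dK X Y Z"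
  by (simp add: dc2_def ext_d2_def dc_kform_jet_def Dir_twisted_kform[OF assms])

lemma riem_metric_at_invertible:
  assumes "riem_metric_at G"
  shows "invertible G"
proof -
  have "v = 0" if "G *v v = 0" for v
    using assms that by (auto simp: riem_metric_at_def gmet_def)
  then show ?thesis
    using matrix_left_invertible_ker invertible_left_inverse by blast
qed

lemma integrable_hermitian_jet_at:
  fixes g K :: "real^'n \<Rightarrow> real^'n^'n"
  assumes "open U" "smooth_on U g" "smooth_on U K" "cx_integrable_on U K" "x \<in> U"
    and "\<And>p. p \<in> U \<Longrightarrow> riem_metric_at (g p) \<and> almost_complex_at (K p) \<and> hermitian_at (g p) (K p)"
  shows "integrable_hermitian_jet (g x) (K x) (frechet_derivative g (at x)) (frechet_derivative K (at x))"
proof -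
  note Dg = smooth_on_has_derivative[OF assms(2,1,5)]
  note DK = smooth_on_has_derivative[OF assms(3,1,5)]
  have complex: "\<And>p. p \<in> U \<Longrightarrow> K p ** K p = - mat 1"
    and symmetric: "\<And>p. p \<in> U \<Longrightarrow> transpose (g p) = g p"
    and hermitian: "\<And>p. p \<in> U \<Longrightarrow> hermitian_at (g p) (K p)"
    using assms(6) by (auto simp: almost_complex_at_def riem_metric_at_def)
  show ?thesis
  proof (rule integrable_hermitian_jet.intro)
    show "transpose (g x) = g x" "K x ** K x = - mat 1" "hermitian_at (g x) (K x)"
      using symmetric complex hermitian assms(5) by blast+
    show "invertible (g x)" using assms(5,6) riem_metric_at_invertible by blast
  qed (use has_derivative_linear[OF Dg] has_derivative_linear[OF DK]
      has_derivative_symmetric_matrix[OF Dg assms(1,5) symmetric]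
      has_derivative_complex_structure_anticommute[OF DK assms(1,5) complex]
      has_derivative_hermitian[OF Dg DK assms(1,5) hermitian]
      has_derivative_integrable[OF DK assms(5,4)] in blast)+
qed

lemma gen_kahler_on_jets:
  fixes g I J :: "real^'n \<Rightarrow> real^'n^'n"
  assumes "gen_kahler_on U g I J" "x \<in> U"
  defines "dG \<equiv> frechet_derivative g (at x)" and "dI \<equiv> frechet_derivative I (at x)"
    and "dJ \<equiv> frechet_derivative J (at x)"
  shows "integrable_hermitian_jet (g x) (I x) dG dI"
    and "integrable_hermitian_jet (g x) (J x) dG dJ"
    and "(I has_derivative dI) (at x)" and "(J has_derivative dJ) (at x)"
    and "dc2 I (kform g I) x X = dc_kform_jet (g x) (I x) dG dI X"
    and "dc_kform_jet (g x) (J x) dG dJ X = - dc_kform_jet (g x) (I x) dG dI X"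
proof -
  have U: "open U" "smooth_on U g" "smooth_on U I" "smooth_on U J"
    "cx_integrable_on U I" "cx_integrable_on U J"
    and pointwise: "\<And>p. p \<in> U \<Longrightarrow> riem_metric_at (g p) \<and> almost_complex_at (I p) \<and> almost_complex_at (J p)
            \<and> hermitian_at (g p) (I p) \<and> hermitian_at (g p) (J p)"
    and H: "\<And>Y Z. dc2 I (kform g I) x X Y Z = - dc2 J (kform g J) x X Y Z"
    using assms(1,2) unfolding gen_kahler_on_def by auto
  note Dg = smooth_on_has_derivative[OF U(2,1) assms(2), folded dG_def]
  show DI: "(I has_derivative dI) (at x)" and DJ: "(J has_derivative dJ) (at x)"
    unfolding dI_def dJ_def using smooth_on_has_derivative[OF _ U(1) assms(2)] U(3,4) by blast+
  show "integrable_hermitian_jet (g x) (I x) dG dI" "integrable_hermitian_jet (g x) (J x) dG dJ"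
    unfolding dG_def dI_def dJ_def using pointwise
    by (auto intro!: integrable_hermitian_jet_at[OF U(1)] U assms(2))
  have dc: "dc2 I (kform g I) x X Y Z = dc_kform_jet (g x) (I x) dG dI X Y Z"
    "dc2 J (kform g J) x X Y Z = dc_kform_jet (g x) (J x) dG dJ X Y Z" for Y Z
    using dc2_kform_eq_dc_kform_jet[OF Dg DI U(1) assms(2)] dc2_kform_eq_dc_kform_jet[OF Dg DJ U(1) assms(2)]
      pointwise by (auto simp: almost_complex_at_def)
  show "dc2 I (kform g I) x X = dc_kform_jet (g x) (I x) dG dI X"
    using dc(1) by blast
  show "dc_kform_jet (g x) (J x) dG dJ X = - dc_kform_jet (g x) (I x) dG dI X"
    by (simp add: fun_eq_iff dc[symmetric] H)
qed

theorem lemma2p13: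
  fixes U :: "(real^'n) set"
    and g I J :: "real^'n \<Rightarrow> real^'n^'n"
  assumes gk: "gen_kahler_on U g I J"
    and nondeg: "\<forall>x\<in>U. det (I x + J x) \<noteq> 0"
    and xU: "x \<in> U"
  shows "Dir (\<lambda>p. ln \<bar>det (I p + J p)\<bar>) x X
           = - 2 * inner2 (g x) (bform g I J x) (\<lambda>Y Z. dc2 I (kform g I) x X Y Z)"
proof -
  define dG dI dJ where "dG = frechet_derivative g (at x)"
    and "dI = frechet_derivative I (at x)" and "dJ = frechet_derivative J (at x)"
  note jets = gen_kahler_on_jets[OF gk xU, folded dG_def dI_def dJ_def]
  have "invertible (I x + J x)" using nondeg xU invertible_det_nz by blast
  moreover have "bform g I J x = (\<lambda>Y Z. - gmet (g x) ((matrix_inv (I x + J x) ** (I x - J x)) *v Y) Z)"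
    by (simp add: bform_def fun_eq_iff)
  moreover have "Dir (\<lambda>p. ln \<bar>det (I p + J p)\<bar>) x X = trace (matrix_inv (I x + J x) ** (dI X + dJ X))"
    using Dir_ln_abs_det[OF jets(3,4)] nondeg xU by blast
  ultimately show ?thesis
    using trace_inv_sum_jets_eq_inner2[OF jets(1,2,6)] by (simp add: jets(5))
qed

end
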